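(* Let $\Omega\subset\mathbb{R}^d$ be a connected, bounded open domain, let $\mu$ be a bounded measurable weight on $\Omega$ with $\mu>0$ almost everywhere, let $\mathbf{r}\in\Upsilon$, and assume the hyperplanes $\mathcal{P}_1(\mathbf{r}_1),\ldots,\mathcal{P}_n(\mathbf{r}_n)$ are pairwise distinct. Then the mass matrix $\mathcal{A}(\mathbf{r})$ is symmetric positive definite.
   Context: $\sigma(t)=\max\{0,t\}$. $\mathcal{S}^{d-1}$ is the unit sphere in $\mathbb{R}^d$. For $\mathbf{x}\in\mathbb{R}^d$ write $\mathbf{y}=(1,x_1,\ldots,x_d)^T$. For $\mathbf{r}_i=(b_i,\boldsymbol{\omega}_i)\in\mathbb{R}^{d+1}$, $\mathcal{P}_i(\mathbf{r}_i)=\{\mathbf{x}\in\Omega:\boldsymbol{\omega}_i\cdot\mathbf{x}+b_i=0\}$; $\Upsilon=\{\mathbf{r}=(\mathbf{r}_1,\ldots,\mathbf{r}_n): \mathbf{r}_i=(b_i,\boldsymbol{\omega}_i),\ b_i\in\mathbb{R},\ \boldsymbol{\omega}_i\in\mathcal{S}^{d-1},\ \mathcal{P}_i(\mathbf{r}_i)\cap\Omega\neq\emptyset\}$. Set $\sigma_0\equiv1$, $\sigma_i(\mathbf{x})=\sigma(\mathbf{r}_i\cdot\mathbf{y})$, and $\hat{\Sigma}(\mathbf{x};\mathbf{r})=(\sigma_0(\mathbf{x}),\sigma_1(\mathbf{x}),\ldots,\sigma_n(\mathbf{x}))^T$. The mass matrix is the $(n+1)\times(n+1)$ matrix $\mathcal{A}(\mathbf{r})=\int_\Omega\mu(\mathbf{x})\hat{\Sigma}(\mathbf{x};\mathbf{r})\hat{\Sigma}(\mathbf{x};\mathbf{r})^T\,d\mathbf{x}$,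 i.e. $a_{ij}=\int_\Omega\mu\,\sigma_i\sigma_j\,d\mathbf{x}$, $i,j=0,\ldots,n$. *)

theory Defs
  imports "HOL-Analysis.Analysis"
begin

definition relu :: "real \<Rightarrow> real" where
  "relu t = max 0 t"

definition hyperplane_in :: "'a::euclidean_space set \<Rightarrow> real \<Rightarrow> 'a \<Rightarrow> 'a set" where
  "hyperplane_in \<Omega> b w = {x \<in> \<Omega>. w \<bullet> x + b = 0}"

text \<open>Membership of r = (r_1,...,r_n), r_i = (b i, w i), in Upsilon.\<close>
definition in_Upsilon :: "'a::euclidean_space set \<Rightarrow> nat \<Rightarrow> (nat \<Rightarrow> real) \<Rightarrow> (nat \<Rightarrow> 'a) \<Rightarrow> bool" where
  "in_Upsilon \<Omega> n b w \<longleftrightarrow>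
     (\<forall>i\<in>{1..n}. w i \<in> sphere 0 1 \<and> hyperplane_in \<Omega> (b i) (w i) \<noteq> {})"

definition sigma_basis :: "(nat \<Rightarrow> real) \<Rightarrow> (nat \<Rightarrow> 'a::euclidean_space) \<Rightarrow> nat \<Rightarrow> 'a \<Rightarrow> real" where
  "sigma_basis b w i x = (if i = 0 then 1 else relu (b i + w i \<bullet> x))"

definition mass_matrix :: "'a::euclidean_space set \<Rightarrow> ('a \<Rightarrow> real) \<Rightarrow> (nat \<Rightarrow> real) \<Rightarrow> (nat \<Rightarrow> 'a) \<Rightarrow> nat \<Rightarrow> nat \<Rightarrow> real" where
  "mass_matrix \<Omega> \<mu> b w i j =
     integral\<^sup>L (lebesgue_on \<Omega>) (\<lambda>x. \<mu> x * sigma_basis b w i x * sigma_basis b w j x)"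

definition sym_pos_def :: "nat \<Rightarrow> (nat \<Rightarrow> nat \<Rightarrow> real) \<Rightarrow> bool" where
  "sym_pos_def n A \<longleftrightarrow>
     (\<forall>i\<le>n. \<forall>j\<le>n. A i j = A j i) \<and>
     (\<forall>c::nat \<Rightarrow> real. (\<exists>i\<le>n. c i \<noteq> 0) \<longrightarrow> (\<Sum>i\<le>n. \<Sum>j\<le>n. c i * A i j * c j) > 0)"

end

theory Submission imports Defs begin

text \<open>
  The quadratic form of the mass matrix is the integral of \<open>\<mu> f\<^sup>2\<close> with
  \<open>f = \<Sum>i\<le>n. c\<^sub>i \<sigma>\<^sub>i\<close>; since \<open>f\<close> is continuous and \<open>\<mu> > 0\<close> almost everywhere, it can only
  vanish if \<open>f = 0\<close> on the open set \<open>\<Omega>\<close>. So it suffices that \<open>1, \<sigma>\<^sub>1, \<dots>, \<sigma>\<^sub>n\<close> are linearly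
  independent on \<open>\<Omega>\<close>. Choose a point \<open>q \<in> \<Omega>\<close> on the \<open>k\<close>-th hyperplane but on none of the
  others (they meet it in null sets, because the hyperplanes are distinct). Along the unit
  normal \<open>w\<^sub>k\<close>, the second difference \<open>f(q + s w\<^sub>k) + f(q - s w\<^sub>k) - 2 f(q)\<close> with small \<open>s\<close>
  annihilates the constant and every \<open>\<sigma>\<^sub>i\<close> that is affine near \<open>q\<close>, and leaves \<open>c\<^sub>k s\<close> from
  the kink of \<open>\<sigma>\<^sub>k\<close>.
\<close>

lemma relu_second_difference_kink: "0 \<le> s \<Longrightarrow> relu s + relu (- s) - 2 * relu 0 = s"
  by (simp add: relu_def)

lemma relu_second_difference_linear:
  "\<bar>d\<bar> \<le> \<bar>t\<bar> \<Longrightarrow> relu (t + d) + relu (t - d) - 2 * relu t = 0"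
  by (auto simp: relu_def max_def)

lemma hyperplane_in_scale:
  "l \<noteq> 0 \<Longrightarrow> hyperplane_in \<Omega> (l * c) (l *\<^sub>R u) = hyperplane_in \<Omega> c u"
proof -
  assume "l \<noteq> 0"
  have "l * c + (l *\<^sub>R u) \<bullet> x = l * (c + u \<bullet> x)" for x by (simp add: algebra_simps)
  with \<open>l \<noteq> 0\<close> show ?thesis by (auto simp: hyperplane_in_def add.commute)
qed

lemma hyperplane_point_avoiding:
  fixes \<Omega> :: "'a::euclidean_space set"
  assumes "open \<Omega>" and p: "p \<in> \<Omega>" "u \<bullet> p + c = 0" and u: "norm u = 1" and "finite J"
    and nonprop: "\<And>j l. j \<in> J \<Longrightarrow> v j = l *\<^sub>R u \<Longrightarrow> d j = l * c \<Longrightarrow> False"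
  obtains q where "q \<in> \<Omega>" "u \<bullet> q + c = 0" "\<And>j. j \<in> J \<Longrightarrow> v j \<bullet> q + d j \<noteq> 0"
proof -
  have uu: "u \<bullet> u = 1" using u by (simp add: norm_eq_1)
  define P where "P x = x - (u \<bullet> x + c) *\<^sub>R u" for x
  have P_on: "u \<bullet> P x + c = 0" for x unfolding P_def using uu by (simp add: algebra_simps)
  have P_affine: "v j \<bullet> P x + d j = (v j - (v j \<bullet> u) *\<^sub>R u) \<bullet> x + (d j - c * (v j \<bullet> u))" for j x
    unfolding P_def by (simp add: algebra_simps inner_commute)
  define N where "N j = {x. (v j - (v j \<bullet> u) *\<^sub>R u) \<bullet> x = - (d j - c * (v j \<bullet> u))}" for j
  have "negligible (N j)" if "j \<in> J" for j
    unfolding N_def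
    by (rule negligible_hyperplane) (use nonprop[OF that, of "v j \<bullet> u"] in \<open>auto simp: mult.commute\<close>)
  then have "negligible (\<Union>j\<in>J. N j)" using \<open>finite J\<close> by (intro negligible_Union) auto
  obtain e where e: "e > 0" "ball p e \<subseteq> \<Omega>" using \<open>open \<Omega>\<close> p(1) by (meson open_contains_ball)
  have "\<not> negligible (ball p (e/2))" using e by (intro open_not_negligible) auto
  then obtain x where x: "x \<in> ball p (e/2)" "\<And>j. j \<in> J \<Longrightarrow> x \<notin> N j"
    using negligible_subset[OF \<open>negligible (\<Union>j\<in>J. N j)\<close>] by blast
  \<comment> \<open>The projection onto the plane moves points by at most twice their distance to p.\<close>
  have "u \<bullet> x + c = u \<bullet> (x - p)" using p(2) by (simp add: inner_diff_right)
  then have "P x - p = (x - p) - (u \<bullet> (x - p)) *\<^sub>R u" by (simp add: P_def)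
  then have "norm (P x - p) \<le> norm (x - p) + \<bar>u \<bullet> (x - p)\<bar>"
    using u by (metis norm_scaleR norm_triangle_ineq4 real_norm_def mult.right_neutral)
  also have "\<dots> \<le> 2 * norm (x - p)" using Cauchy_Schwarz_ineq2[of u "x - p"] u by simp
  also have "\<dots> < e" using x(1) by (simp add: dist_norm norm_minus_commute)
  finally have "P x \<in> \<Omega>" using e by (auto simp: dist_norm norm_minus_commute)
  moreover have "v j \<bullet> P x + d j \<noteq> 0" if "j \<in> J" for j
    using x(2)[OF that] by (simp add: P_affine N_def)
  ultimately show thesis using that P_on by blast
qed

lemma sigma_basis_second_difference:
  fixes q :: "'a::euclidean_space"
  assumes "k \<noteq> 0" and wk: "norm (w k) = 1" "w k \<bullet> q + b k = 0" and "0 \<le> s"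
    and small: "i \<notin> {0, k} \<Longrightarrow> norm (w i) \<le> 1 \<and> s \<le> \<bar>w i \<bullet> q + b i\<bar>"
  shows "sigma_basis b w i (q + s *\<^sub>R w k) + sigma_basis b w i (q - s *\<^sub>R w k)
           - 2 * sigma_basis b w i q = (if i = k then s else 0)"
proof -
  consider "i = 0" | "i = k" | "i \<notin> {0, k}" by blast
  then show ?thesis
  proof cases
    case 1
    then show ?thesis using \<open>k \<noteq> 0\<close> by (simp add: sigma_basis_def)
  next
    case 2
    have "w k \<bullet> w k = 1" using wk(1) by (simp add: norm_eq_1)
    then have "b k + w k \<bullet> (q + s *\<^sub>R w k) = s" "b k + w k \<bullet> (q - s *\<^sub>R w k) = - s" "b k + w k \<bullet> q = 0"
      using wk(2) by (simp_all add: algebra_simps)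
    then show ?thesis
      using 2 \<open>k \<noteq> 0\<close> relu_second_difference_kink[OF \<open>0 \<le> s\<close>] by (simp add: sigma_basis_def)
  next
    case 3
    have "\<bar>w i \<bullet> w k\<bar> \<le> 1" using Cauchy_Schwarz_ineq2[of "w i" "w k"] small[OF 3] wk(1) by simp
    then have "\<bar>s * (w i \<bullet> w k)\<bar> \<le> \<bar>w i \<bullet> q + b i\<bar>"
      using small[OF 3] mult_left_le[of "\<bar>w i \<bullet> w k\<bar>" s] \<open>0 \<le> s\<close> by (simp add: abs_mult)
    from relu_second_difference_linear[OF this] 3 show ?thesis
      by (simp add: sigma_basis_def algebra_simps)
  qed
qed

lemma open_contains_small_ball:
  assumes "open S" "x \<in> S" "finite J" "\<And>j. j \<in> J \<Longrightarrow> 0 < a j"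
  obtains r where "0 < r" "ball x r \<subseteq> S" "\<And>j. j \<in> J \<Longrightarrow> r < a j"
proof -
  obtain e where e: "0 < e" "ball x e \<subseteq> S" using assms(1,2) by (meson open_contains_ball)
  define r where "r = Min (insert e (a ` J)) / 2"
  have "0 < Min (insert e (a ` J))" using assms(3,4) e(1) by (subst Min_gr_iff) auto
  moreover have "Min (insert e (a ` J)) \<le> e" "\<And>j. j \<in> J \<Longrightarrow> Min (insert e (a ` J)) \<le> a j"
    using assms(3) by auto
  ultimately have "0 < r" "r < e" "\<And>j. j \<in> J \<Longrightarrow> r < a j" by (fastforce simp: r_def)+
  then show thesis using that e(2) by (meson order_trans subset_ball less_imp_le)
qed

lemma sigma_basis_coeff_eq_zero:
  fixes \<Omega> :: "'a::euclidean_space set"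
  assumes "open \<Omega>" and U: "in_Upsilon \<Omega> n b w"
    and distinct: "\<forall>i\<in>{1..n}. \<forall>j\<in>{1..n}. i \<noteq> j \<longrightarrow> hyperplane_in \<Omega> (b i) (w i) \<noteq> hyperplane_in \<Omega> (b j) (w j)"
    and zero: "\<forall>x\<in>\<Omega>. (\<Sum>i\<le>n. c i * sigma_basis b w i x) = 0"
    and k: "k \<in> {1..n}"
  shows "c k = 0"
proof -
  define J where "J = {1..n} - {k}"
  have unit: "norm (w i) = 1" if "i \<in> {1..n}" for i using U that by (auto simp: in_Upsilon_def)
  obtain p where p: "p \<in> \<Omega>" "w k \<bullet> p + b k = 0"
    using U k unfolding in_Upsilon_def hyperplane_in_def by blast
  have "False" if "j \<in> J" "w j = l *\<^sub>R w k" "b j = l * b k" for j l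
  proof -
    have "l \<noteq> 0" using unit[of j] that by (auto simp: J_def)
    then have "hyperplane_in \<Omega> (b j) (w j) = hyperplane_in \<Omega> (b k) (w k)"
      using that by (simp add: hyperplane_in_scale)
    then show False using distinct k that(1) by (auto simp: J_def)
  qed
  then obtain q where q: "q \<in> \<Omega>" "w k \<bullet> q + b k = 0" and off: "\<And>j. j \<in> J \<Longrightarrow> w j \<bullet> q + b j \<noteq> 0"
    using hyperplane_point_avoiding[OF \<open>open \<Omega>\<close> p unit[OF k], of J w b] by (auto simp: J_def)
  obtain r where r: "0 < r" "ball q r \<subseteq> \<Omega>" "\<And>j. j \<in> J \<Longrightarrow> r < \<bar>w j \<bullet> q + b j\<bar>"
    using open_contains_small_ball[OF \<open>open \<Omega>\<close> q(1), of J "\<lambda>j. \<bar>w j \<bullet> q + b j\<bar>"] off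
    by (auto simp: J_def)
  define s where "s = r / 2"
  define \<sigma> where "\<sigma> = sigma_basis b w"
  have "q + s *\<^sub>R w k \<in> \<Omega>" "q - s *\<^sub>R w k \<in> \<Omega>"
    using r(1,2) unit[OF k] by (auto simp: s_def dist_norm subset_iff)
  then have "0 = (\<Sum>i\<le>n. c i * \<sigma> i (q + s *\<^sub>R w k)) + (\<Sum>i\<le>n. c i * \<sigma> i (q - s *\<^sub>R w k))
                 - 2 * (\<Sum>i\<le>n. c i * \<sigma> i q)"
    using zero q(1) by (simp add: \<sigma>_def)
  also have "\<dots> = (\<Sum>i\<le>n. c i * (\<sigma> i (q + s *\<^sub>R w k) + \<sigma> i (q - s *\<^sub>R w k) - 2 * \<sigma> i q))"
    by (simp add: sum_subtractf sum.distrib sum_distrib_left algebra_simps)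
  also have "\<dots> = (\<Sum>i\<le>n. c i * (if i = k then s else 0))"
    unfolding \<sigma>_def
  proof (intro sum.cong refl arg_cong[where f = "(*) _"] sigma_basis_second_difference)
    show "norm (w i) \<le> 1 \<and> s \<le> \<bar>w i \<bullet> q + b i\<bar>" if "i \<in> {..n}" "i \<notin> {0, k}" for i
      using that unit[of i] r(1) r(3)[of i] by (auto simp: J_def s_def)
  qed (use k q r unit[OF k] in \<open>auto simp: s_def\<close>)
  also have "\<dots> = c k * s" using k by (simp add: if_distrib sum.delta cong: if_cong)
  finally show ?thesis using r(1) by (simp add: s_def)
qed

lemma sigma_basis_linear_independent:
  fixes \<Omega> :: "'a::euclidean_space set"
  assumes "open \<Omega>" "\<Omega> \<noteq> {}" "in_Upsilon \<Omega> n b w"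
    and "\<forall>i\<in>{1..n}. \<forall>j\<in>{1..n}. i \<noteq> j \<longrightarrow> hyperplane_in \<Omega> (b i) (w i) \<noteq> hyperplane_in \<Omega> (b j) (w j)"
    and zero: "\<forall>x\<in>\<Omega>. (\<Sum>i\<le>n. c i * sigma_basis b w i x) = 0"
  shows "\<forall>i\<le>n. c i = 0"
proof -
  have ck: "c k = 0" if "k \<in> {1..n}" for k
    using sigma_basis_coeff_eq_zero[OF assms(1,3,4) zero that] .
  obtain x where "x \<in> \<Omega>" using \<open>\<Omega> \<noteq> {}\<close> by blast
  have "(\<Sum>i\<le>n. c i * sigma_basis b w i x) = (\<Sum>i\<le>n. if i = 0 then c 0 else 0)"
    using ck by (intro sum.cong) (auto simp: sigma_basis_def)
  then have "c 0 = 0" using zero \<open>x \<in> \<Omega>\<close> by simp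
  with ck show ?thesis by (metis atLeastAtMost_iff le_zero_eq not_less_eq_eq One_nat_def)
qed

lemma continuous_on_sigma_basis: "continuous_on S (sigma_basis b w i)"
  by (cases "i = 0") (auto simp: sigma_basis_def relu_def intro!: continuous_intros)

lemma continuous_on_AE_zero_imp_zero:
  fixes \<Omega> :: "'a::euclidean_space set"
  assumes "open \<Omega>" "continuous_on \<Omega> f" "AE x in lebesgue_on \<Omega>. f x = (0::real)" "x \<in> \<Omega>"
  shows "f x = 0"
proof (rule ccontr)
  assume "f x \<noteq> 0"
  define U where "U = \<Omega> \<inter> f -` (- {0})"
  have "open U"
    using continuous_open_preimage[OF assms(2,1), of "- {0}"] by (simp add: U_def open_Compl)
  then have U: "U \<in> sets (lebesgue_on \<Omega>)" "U \<subseteq> \<Omega>"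
    using \<open>open \<Omega>\<close> by (auto simp: U_def sets_restrict_space_iff)
  have "{y \<in> space (lebesgue_on \<Omega>). f y \<noteq> 0} = U" by (auto simp: U_def)
  then have "emeasure (lebesgue_on \<Omega>) U = 0" using AE_iff_measurable[OF U(1)] assms(3) by auto
  then have "negligible U"
    using U \<open>open \<Omega>\<close> \<open>open U\<close>
    by (simp add: emeasure_restrict_space negligible_iff_null_sets null_setsI)
  moreover have "x \<in> U" using \<open>f x \<noteq> 0\<close> assms(4) by (simp add: U_def)
  ultimately show False using open_not_negligible[OF \<open>open U\<close>] by auto
qed

lemma integrable_lebesgue_on_bounded_mult_continuous:
  fixes \<Omega> :: "'a::euclidean_space set"
  assumes "bounded \<Omega>" "\<Omega> \<in> sets lebesgue" "\<mu> \<in> borel_measurable (lebesgue_on \<Omega>)"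
    and "\<exists>B. \<forall>x\<in>\<Omega>. \<bar>\<mu> x\<bar> \<le> B" and "continuous_on UNIV g"
  shows "integrable (lebesgue_on \<Omega>) (\<lambda>x. \<mu> x * g x :: real)"
proof -
  interpret finite_measure "lebesgue_on \<Omega>"
    using assms(1,2) by (intro finite_measure_lebesgue_on bounded_set_imp_lmeasurable)
  obtain B where B: "\<forall>x\<in>\<Omega>. \<bar>\<mu> x\<bar> \<le> B" using assms(4) by blast
  have "compact (g ` closure \<Omega>)"
    using assms(1,5) by (intro compact_continuous_image) (auto intro: continuous_on_subset)
  then have "bounded (g ` \<Omega>)"
    using closure_subset by (metis compact_imp_bounded bounded_subset image_mono)
  then obtain C where C: "\<forall>x\<in>\<Omega>. \<bar>g x\<bar> \<le> C" by (auto simp: bounded_real)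
  have "g \<in> borel_measurable (lebesgue_on \<Omega>)"
    using assms(2,5) by (intro continuous_imp_measurable_on_sets_lebesgue) (auto intro: continuous_on_subset)
  then have meas: "(\<lambda>x. \<mu> x * g x) \<in> borel_measurable (lebesgue_on \<Omega>)"
    using assms(3) by (rule borel_measurable_times[rotated])
  show ?thesis
  proof (rule integrable_const_bound[OF _ meas])
    show "AE x in lebesgue_on \<Omega>. norm (\<mu> x * g x) \<le> B * C"
    proof (rule AE_I2)
      fix x assume "x \<in> space (lebesgue_on \<Omega>)"
      then have "\<bar>\<mu> x\<bar> \<le> B" "\<bar>g x\<bar> \<le> C" using B C by auto
      then show "norm (\<mu> x * g x) \<le> B * C"
        by (simp add: abs_mult mult_mono order_trans[OF abs_ge_zero])
    qed
  qed
qed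

lemma quadratic_form_integral:
  fixes f :: "'i \<Rightarrow> 'a \<Rightarrow> real"
  assumes "\<And>i j. i \<in> I \<Longrightarrow> j \<in> I \<Longrightarrow> integrable M (\<lambda>x. g x * f i x * f j x)"
  shows "(\<Sum>i\<in>I. \<Sum>j\<in>I. c i * (\<integral>x. g x * f i x * f j x \<partial>M) * c j)
           = (\<integral>x. g x * (\<Sum>i\<in>I. c i * f i x)\<^sup>2 \<partial>M)"
proof -
  have "(\<Sum>i\<in>I. \<Sum>j\<in>I. c i * (\<integral>x. g x * f i x * f j x \<partial>M) * c j)
      = (\<Sum>i\<in>I. \<Sum>j\<in>I. \<integral>x. c i * c j * (g x * f i x * f j x) \<partial>M)"
    by (simp add: mult_ac)
  also have "\<dots> = (\<integral>x. (\<Sum>i\<in>I. \<Sum>j\<in>I. c i * c j * (g x * f i x * f j x)) \<partial>M)"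
    using assms by (simp add: integral_sum)
  also have "\<dots> = (\<integral>x. g x * (\<Sum>i\<in>I. c i * f i x)\<^sup>2 \<partial>M)"
    unfolding power2_eq_square sum_product by (simp add: sum_distrib_left mult_ac)
  finally show ?thesis .
qed

lemma integral_weighted_square_pos:
  fixes \<Omega> :: "'a::euclidean_space set" and \<mu> f :: "'a \<Rightarrow> real"
  assumes "open \<Omega>" "AE x in lebesgue_on \<Omega>. \<mu> x > 0" "continuous_on \<Omega> f"
    and "integrable (lebesgue_on \<Omega>) (\<lambda>x. \<mu> x * (f x)\<^sup>2)" "x \<in> \<Omega>" "f x \<noteq> 0"
  shows "(\<integral>x. \<mu> x * (f x)\<^sup>2 \<partial>lebesgue_on \<Omega>) > 0"
proof -
  have nonneg: "AE x in lebesgue_on \<Omega>. 0 \<le> \<mu> x * (f x)\<^sup>2" using assms(2) by eventually_elim simp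
  have "(\<integral>x. \<mu> x * (f x)\<^sup>2 \<partial>lebesgue_on \<Omega>) \<noteq> 0"
  proof
    assume "(\<integral>x. \<mu> x * (f x)\<^sup>2 \<partial>lebesgue_on \<Omega>) = 0"
    then have "AE x in lebesgue_on \<Omega>. \<mu> x * (f x)\<^sup>2 = 0"
      using integral_nonneg_eq_0_iff_AE[OF assms(4) nonneg] by simp
    then have "AE x in lebesgue_on \<Omega>. f x = 0" using assms(2) by eventually_elim auto
    then show False using continuous_on_AE_zero_imp_zero assms(1,3,5,6) by blast
  qed
  then show ?thesis using integral_nonneg_AE[OF nonneg] by linarith
qed

lemma mass_matrix_symmetric: "mass_matrix \<Omega> \<mu> b w i j = mass_matrix \<Omega> \<mu> b w j i"
  by (simp add: mass_matrix_def mult_ac)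

lemma mass_matrix_quadratic_form:
  fixes \<Omega> :: "'a::euclidean_space set"
  assumes "bounded \<Omega>" "\<Omega> \<in> sets lebesgue" "\<mu> \<in> borel_measurable (lebesgue_on \<Omega>)"
    and "\<exists>B. \<forall>x\<in>\<Omega>. \<bar>\<mu> x\<bar> \<le> B"
  shows "(\<Sum>i\<le>n. \<Sum>j\<le>n. c i * mass_matrix \<Omega> \<mu> b w i j * c j)
           = (\<integral>x. \<mu> x * (\<Sum>i\<le>n. c i * sigma_basis b w i x)\<^sup>2 \<partial>lebesgue_on \<Omega>)"
  unfolding mass_matrix_def
proof (rule quadratic_form_integral)
  fix i j
  have "continuous_on UNIV (\<lambda>x. sigma_basis b w i x * sigma_basis b w j x)"
    by (intro continuous_on_mult continuous_on_sigma_basis)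
  from integrable_lebesgue_on_bounded_mult_continuous[OF assms this]
  show "integrable (lebesgue_on \<Omega>) (\<lambda>x. \<mu> x * sigma_basis b w i x * sigma_basis b w j x)"
    by (simp add: mult.assoc)
qed

theorem lemma4p1:
  fixes \<Omega> :: "'a::euclidean_space set"
    and \<mu> :: "'a \<Rightarrow> real"
    and n :: nat
    and b :: "nat \<Rightarrow> real"
    and w :: "nat \<Rightarrow> 'a"
  assumes "open \<Omega>" and "connected \<Omega>" and "bounded \<Omega>" and "\<Omega> \<noteq> {}"
    and "\<mu> \<in> borel_measurable (lebesgue_on \<Omega>)"
    and "\<exists>B. \<forall>x\<in>\<Omega>. \<bar>\<mu> x\<bar> \<le> B"
    and "AE x in lebesgue_on \<Omega>. \<mu> x > 0"
    and "in_Upsilon \<Omega> n b w"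
    and "\<forall>i\<in>{1..n}. \<forall>j\<in>{1..n}. i \<noteq> j \<longrightarrow> hyperplane_in \<Omega> (b i) (w i) \<noteq> hyperplane_in \<Omega> (b j) (w j)"
  shows "sym_pos_def n (mass_matrix \<Omega> \<mu> b w)"
proof -
  have \<Omega>: "\<Omega> \<in> sets lebesgue" using \<open>open \<Omega>\<close> by auto
  have "(\<Sum>i\<le>n. \<Sum>j\<le>n. c i * mass_matrix \<Omega> \<mu> b w i j * c j) > 0" if c: "\<exists>i\<le>n. c i \<noteq> 0" for c
  proof -
    define f where "f x = (\<Sum>i\<le>n. c i * sigma_basis b w i x)" for x
    have cont: "continuous_on S f" for S
      unfolding f_def by (intro continuous_intros continuous_on_sigma_basis)
    obtain x where "x \<in> \<Omega>" "f x \<noteq> 0"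
      using sigma_basis_linear_independent[OF assms(1,4,8,9), of c] c unfolding f_def by blast
    have "integrable (lebesgue_on \<Omega>) (\<lambda>x. \<mu> x * (f x)\<^sup>2)"
      using cont by (intro integrable_lebesgue_on_bounded_mult_continuous[OF assms(3) \<Omega> assms(5,6)]
          continuous_on_power)
    from integral_weighted_square_pos[OF assms(1,7) cont this \<open>x \<in> \<Omega>\<close> \<open>f x \<noteq> 0\<close>] show ?thesis
      using mass_matrix_quadratic_form[OF assms(3) \<Omega> assms(5,6)] by (simp add: f_def)
  qed
  then show ?thesis unfolding sym_pos_def_def using mass_matrix_symmetric by blast
qed

end
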